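(* Let $k\ge1$, $A,B_1,\dots,B_k,C_1,\dots,C_k\in\mathbb{C}^{r\times r}$ with $C_j+mI$ invertible for all $m\ge0$ and all $j$, and $C_iC_j=C_jC_i$ for all $i,j$. Fix $i$ and $n\ge1$, and suppose $B_i+mI$ is invertible for all $m\ge0$. Then $$F_{\mathcal A}[B_i+nI]=\sum_{n_1=0}^n\binom{n}{n_1}(A)_{n_1}x_i^{n_1}\,F_{\mathcal A}[A+n_1I,\,B_i+n_1I,\,C_i+n_1I]\,(C_i)^{-1}_{n_1}.$$ Furthermore, if $B_i-n_1I$ is invertible for $0\le n_1\le n$, then $$F_{\mathcal A}[B_i-nI]=\sum_{n_1=0}^n\binom{n}{n_1}(A)_{n_1}(-x_i)^{n_1}\,F_{\mathcal A}[A+n_1I,\,C_i+n_1I]\,(C_i)^{-1}_{n_1}.$$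
   Context: For $M\in\mathbb{C}^{r\times r}$: $(M)_0=I$, $(M)_m=M(M+I)\cdots(M+(m-1)I)$, $(M)^{-1}_m=((M)_m)^{-1}$. $$F_{\mathcal A}=F_{\mathcal A}[A,B_1,\dots,B_k;C_1,\dots,C_k;x_1,\dots,x_k]=\sum_{m_1,\dots,m_k\ge0}(A)_{m_1+\cdots+m_k}\prod_{j=1}^k(B_j)_{m_j}\prod_{j=1}^k(C_j)^{-1}_{m_j}\prod_{j=1}^k\frac{x_j^{m_j}}{m_j!},$$ $x_j$ scalar variables, matrix products in order of increasing index; identities are of formal power series in the $x_j$. $F_{\mathcal A}[\dots]$ lists only the shifted parameters, all others unchanged (in the second formula $B_i$ is unshifted). *)

theory Defs
  imports "HOL-Analysis.Analysis"
begin

type_synonym 'n cmat = "complex^'n^'n"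

fun mpoch :: "'n::finite cmat \<Rightarrow> nat \<Rightarrow> 'n cmat" where
  "mpoch M 0 = mat 1"
| "mpoch M (Suc m) = mpoch M m ** (M + mat (of_nat m))"

definition mpoch_inv :: "'n::finite cmat \<Rightarrow> nat \<Rightarrow> 'n cmat" where
  "mpoch_inv M m = matrix_inv (mpoch M m)"

definition oprod :: "(nat \<Rightarrow> 'n::finite cmat) \<Rightarrow> nat list \<Rightarrow> 'n cmat" where
  "oprod f js = foldr (\<lambda>j acc. f j ** acc) js (mat 1)"

text \<open>A formal power series in the scalar variables x_1..x_k with matrix coefficients is
  represented by its coefficient function on multi-indices m :: nat \<Rightarrow> nat
  (m j = exponent of x_j; only indices j in {1..k} are relevant).\<close>
type_synonym 'n mfps = "(nat \<Rightarrow> nat) \<Rightarrow> 'n cmat"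

definition FA :: "nat \<Rightarrow> 'n::finite cmat \<Rightarrow> (nat \<Rightarrow> 'n cmat) \<Rightarrow> (nat \<Rightarrow> 'n cmat) \<Rightarrow> 'n mfps" where
  "FA k A B C = (\<lambda>m. (1 / real (\<Prod>j\<in>{1..k}. fact (m j))) *\<^sub>R
      (mpoch A (\<Sum>j\<in>{1..k}. m j)
       ** oprod (\<lambda>j. mpoch (B j) (m j)) [1..<k+1]
       ** oprod (\<lambda>j. mpoch_inv (C j) (m j)) [1..<k+1]))"

definition xmul :: "nat \<Rightarrow> nat \<Rightarrow> 'n::finite mfps \<Rightarrow> 'n mfps" where
  "xmul i p S = (\<lambda>m. if p \<le> m i then S (m(i := m i - p)) else 0)"

end

theory Submission
  imports Defs
begin

text \<open>Compare coefficients of \<open>x^m\<close>: the two sides differ only in the \<open>i\<close>-th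
  \<open>B\<close>-factor. Iterating \<open>(X + I)_m = (X)_m + m (X + I)_(m-1)\<close> gives the shift identities
  \<open>(B + nI)_m = \<Sum>_j C(n,j) m(m-1)...(m-j+1) (B + jI)_(m-j)\<close> and
  \<open>(B - nI)_m = \<Sum>_j (-1)^j C(n,j) m(m-1)...(m-j+1) (B)_(m-j)\<close>.
  Their \<open>j\<close>-th term is the coefficient of \<open>x^m\<close> in the \<open>j\<close>-th summand on the right:
  \<open>(A)_j (A + jI)_(s-j) = (A)_s\<close>; the trailing \<open>(C_i)^-1_j\<close> moves to position \<open>i\<close>
  because the \<open>C_l\<close> commute, and there completes \<open>(C_i + jI)^-1_(m_i-j)\<close> to
  \<open>(C_i)^-1_(m_i)\<close>; finally \<open>m_i(m_i-1)...(m_i-j+1)\<close> turns \<open>1/(m_i-j)!\<close> into \<open>1/m_i!\<close>.\<close>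

lemma mat_add: "mat (a + b) = (mat a + mat b :: 'a::monoid_add^'n^'n)"
  by (simp add: mat_def vec_eq_iff)

lemma mat_of_nat_add:
  "mat (of_nat a) + mat (of_nat b) = (mat (of_nat (a + b)) :: 'a::semiring_1^'n^'n)"
  by (simp add: mat_add)

lemma matrix_mul_mat_commute: "X ** mat c = mat c ** (X :: 'a::comm_semiring_1^'n^'n)"
  by (simp add: matrix_matrix_mult_def mat_def vec_eq_iff if_distrib if_distribR sum.delta'
      mult.commute cong: if_cong)

lemma matrix_add_rdistrib: "(X + Y) ** Z = X ** Z + Y ** (Z :: 'a::semiring_1^'p^'n)"
  by (simp add: matrix_matrix_mult_def vec_eq_iff sum.distrib distrib_right)

lemma matrix_mul_scaleR_left: "(r *\<^sub>R X) ** Y = r *\<^sub>R (X ** (Y :: 'a::real_algebra_1^'p^'n))"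
  by (simp add: scalar_matrix_assoc)

lemma matrix_mul_scaleR_right: "X ** (r *\<^sub>R Y) = r *\<^sub>R (X ** (Y :: 'a::real_algebra_1^'p^'n))"
  by (simp add: matrix_scalar_ac scalar_matrix_assoc)

lemma matrix_mul_sum_left: "(\<Sum>j\<in>S. f j) ** Z = (\<Sum>j\<in>S. f j ** (Z :: 'a::semiring_1^'p^'n))"
  by (induction S rule: infinite_finite_induct) (auto simp: matrix_add_rdistrib)

lemma matrix_mul_sum_right: "Z ** (\<Sum>j\<in>S. f j) = (\<Sum>j\<in>S. Z ** (f j :: 'a::semiring_1^'p^'n))"
  by (induction S rule: infinite_finite_induct) (auto simp: matrix_add_ldistrib)

lemma matrix_inv_left_right:
  assumes "invertible (X :: 'a::semiring_1^'n^'n)"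
  shows "matrix_inv X ** X = mat 1" "X ** matrix_inv X = mat 1"
proof -
  have "\<exists>X'. X ** X' = mat 1 \<and> X' ** X = mat 1" using assms invertible_def by blast
  then have "X ** matrix_inv X = mat 1 \<and> matrix_inv X ** X = mat 1"
    unfolding matrix_inv_def by (rule someI_ex)
  then show "matrix_inv X ** X = mat 1" "X ** matrix_inv X = mat 1" by auto
qed

lemma matrix_inv_unique:
  assumes "invertible (X :: 'a::semiring_1^'n^'n)" and "Z ** X = mat 1"
  shows "matrix_inv X = Z"
proof -
  have "Z = Z ** (X ** matrix_inv X)" using matrix_inv_left_right(2)[OF assms(1)] by simp
  also have "\<dots> = matrix_inv X" by (simp add: matrix_mul_assoc assms(2))
  finally show ?thesis by simp
qed

lemma matrix_inv_mult:
  assumes "invertible (X :: 'a::semiring_1^'n^'n)" and "invertible (Y :: 'a^'n^'n)"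
  shows "matrix_inv (X ** Y) = matrix_inv Y ** matrix_inv X"
proof (rule matrix_inv_unique)
  show "invertible (X ** Y)" using assms invertible_mult by blast
  have "matrix_inv Y ** matrix_inv X ** (X ** Y) = matrix_inv Y ** (matrix_inv X ** X) ** Y"
    by (simp add: matrix_mul_assoc)
  then show "matrix_inv Y ** matrix_inv X ** (X ** Y) = mat 1"
    by (simp add: matrix_inv_left_right assms)
qed

lemma matrix_inv_commute:
  assumes "invertible (X :: 'a::semiring_1^'n^'n)" and "invertible (Y :: 'a^'n^'n)"
    and "X ** Y = Y ** X"
  shows "matrix_inv X ** matrix_inv Y = matrix_inv Y ** matrix_inv X"
  using matrix_inv_mult[OF assms(1,2)] matrix_inv_mult[OF assms(2,1)] assms(3) by simp

lemma oprod_Nil [simp]: "oprod f [] = mat 1"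
  by (simp add: oprod_def)

lemma oprod_Cons: "oprod f (j # js) = f j ** oprod f js"
  by (simp add: oprod_def)

lemma oprod_append: "oprod f (js @ ls) = oprod f js ** oprod f ls"
  by (induction js) (simp_all add: oprod_Cons matrix_mul_assoc)

lemma oprod_cong: "(\<And>j. j \<in> set js \<Longrightarrow> f j = g j) \<Longrightarrow> oprod f js = oprod g js"
  by (induction js) (simp_all add: oprod_Cons)

lemma oprod_commute:
  "(\<And>j. j \<in> set js \<Longrightarrow> X ** f j = f j ** X) \<Longrightarrow> X ** oprod f js = oprod f js ** X"
proof (induction js)
  case (Cons j js)
  have "X ** (f j ** oprod f js) = f j ** (X ** oprod f js)"
    using Cons.prems by (simp add: matrix_mul_assoc)
  with Cons show ?case by (simp add: oprod_Cons matrix_mul_assoc)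
qed simp

lemma oprod_upt_split:
  assumes "i \<in> {1..k}"
  shows "oprod f [1..<k+1] = oprod f [1..<i] ** f i ** oprod f [Suc i..<k+1]"
proof -
  have "[1..<k+1] = [1..<i] @ i # [Suc i..<k+1]"
    using assms upt_add_eq_append[of 1 i "k + 1 - i"] upt_conv_Cons[of i "k + 1"] by auto
  then show ?thesis by (simp add: oprod_append oprod_Cons matrix_mul_assoc)
qed

lemma oprod_upt_fun_upd:
  assumes "i \<in> {1..k}"
  shows "oprod (f(i := Y)) [1..<k+1] = oprod f [1..<i] ** Y ** oprod f [Suc i..<k+1]"
proof -
  have "oprod (f(i := Y)) js = oprod f js" if "i \<notin> set js" for js
    using that by (intro oprod_cong) auto
  then show ?thesis using oprod_upt_split[OF assms, of "f(i := Y)"] by simp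
qed

lemma mpoch_commute:
  assumes "X ** M = M ** X"
  shows "X ** mpoch M m = mpoch M m ** X"
proof (induction m)
  case (Suc m)
  have "X ** (M + mat (of_nat m)) = (M + mat (of_nat m)) ** X"
    by (simp add: matrix_add_ldistrib matrix_add_rdistrib assms matrix_mul_mat_commute)
  with Suc show ?case by (metis matrix_mul_assoc mpoch.simps(2))
qed simp

lemma mpoch_mpoch_commute:
  assumes "X ** Y = Y ** X"
  shows "mpoch X a ** mpoch Y b = mpoch Y b ** mpoch X a"
proof -
  have "X ** mpoch Y b = mpoch Y b ** X" by (rule mpoch_commute) (use assms in simp)
  then show ?thesis using mpoch_commute[of "mpoch Y b" X a] by simp
qed

lemma mpoch_Suc_left: "mpoch X (Suc m) = X ** mpoch (X + mat 1) m"
proof (induction m)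
  case (Suc m)
  then show ?case by (simp add: matrix_mul_assoc mat_add add.assoc)
qed simp

lemma mpoch_add: "mpoch A a ** mpoch (A + mat (of_nat a)) s = mpoch A (a + s)"
  by (induction s) (simp_all add: matrix_mul_assoc add.assoc mat_add)

lemma mpoch_add_one: "mpoch (X + mat 1) m = mpoch X m + real m *\<^sub>R mpoch (X + mat 1) (m - 1)"
proof (cases m)
  case (Suc l)
  let ?P = "mpoch (X + mat 1) l"
  have "?P ** X = X ** ?P"
    by (rule mpoch_commute[symmetric])
       (simp add: matrix_add_ldistrib matrix_add_rdistrib matrix_mul_mat_commute)
  moreover have "X + mat 1 + mat (of_nat l) = X + real (Suc l) *\<^sub>R mat 1"
    by (simp add: mat_def vec_eq_iff flip: of_real_def)
  ultimately have "mpoch (X + mat 1) m = X ** ?P + real (Suc l) *\<^sub>R ?P"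
    using Suc by (simp only: mpoch.simps matrix_add_ldistrib matrix_mul_scaleR_right matrix_mul_rid)
  then show ?thesis by (simp only: Suc mpoch_Suc_left) simp
qed simp

lemma invertible_mpoch:
  assumes "\<And>q. invertible (C + mat (of_nat q))"
  shows "invertible (mpoch C m)"
proof (induction m)
  case 0
  show ?case by (auto simp: invertible_def)
next
  case (Suc m)
  then show ?case by (simp add: invertible_mult assms)
qed

lemma mpoch_inv_add:
  assumes "\<And>q. invertible (C + mat (of_nat q))" and "j \<le> m"
  shows "mpoch_inv (C + mat (of_nat j)) (m - j) ** mpoch_inv C j = mpoch_inv C m"
proof -
  have "invertible (mpoch (C + mat (of_nat j)) q)" for q
    by (rule invertible_mpoch) (metis add.assoc mat_of_nat_add assms(1))
  then have "mpoch_inv (C + mat (of_nat j)) (m - j) ** mpoch_inv C j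
      = matrix_inv (mpoch C j ** mpoch (C + mat (of_nat j)) (m - j))"
    unfolding mpoch_inv_def by (simp add: matrix_inv_mult invertible_mpoch assms(1))
  then show ?thesis using assms(2) by (simp add: mpoch_add mpoch_inv_def)
qed

lemma mpoch_inv_commute:
  assumes "\<And>q. invertible (C + mat (of_nat q))" and "\<And>q. invertible (D + mat (of_nat q))"
    and "C ** D = D ** C"
  shows "mpoch_inv C a ** mpoch_inv D b = mpoch_inv D b ** mpoch_inv C a"
  unfolding mpoch_inv_def
  by (intro matrix_inv_commute invertible_mpoch mpoch_mpoch_commute assms)

lemma sum_choose_Suc_scaleR:
  fixes f :: "nat \<Rightarrow> 'a::real_vector"
  shows "(\<Sum>j\<le>Suc n. real (Suc n choose j) *\<^sub>R f j)
       = (\<Sum>j\<le>n. real (n choose j) *\<^sub>R f j) + (\<Sum>j\<le>n. real (n choose j) *\<^sub>R f (Suc j))"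
proof -
  have "(\<Sum>j\<le>n. real (n choose j) *\<^sub>R f j) = (\<Sum>j\<le>Suc n. real (n choose j) *\<^sub>R f j)"
    by simp
  also have "\<dots> = f 0 + (\<Sum>j\<le>n. real (n choose Suc j) *\<^sub>R f (Suc j))"
    by (simp only: sum.atMost_Suc_shift) simp
  finally show ?thesis
    by (simp only: sum.atMost_Suc_shift binomial_Suc_Suc of_nat_add scaleR_left_distrib
        sum.distrib) (simp add: add_ac)
qed

lemma choose_Suc_mult_fact:
  "real (m choose Suc j) * fact (Suc j) = real m * (real ((m - 1) choose j) * fact j)"
proof (cases m)
  case (Suc l)
  have "real (Suc l choose Suc j) * real (Suc j) = real (Suc l) * real (l choose j)"
    by (metis Suc_times_binomial_eq of_nat_mult)
  then have "real (Suc l choose Suc j) * (real (Suc j) * fact j)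
      = real (Suc l) * (real (l choose j) * fact j)"
    by (simp only: mult.assoc [symmetric])
  then show ?thesis using Suc by (simp only: fact_Suc diff_Suc_1)
qed simp

lemma mpoch_shift_up:
  "mpoch (M + mat (of_nat n)) m =
    (\<Sum>j\<le>n. real (n choose j) *\<^sub>R (real (m choose j) * fact j) *\<^sub>R
      mpoch (M + mat (of_nat j)) (m - j))"
proof (induction n arbitrary: M m)
  case (Suc n)
  define f where "f j = (real (m choose j) * fact j) *\<^sub>R mpoch (M + mat (of_nat j)) (m - j)" for j
  have step: "real m *\<^sub>R mpoch ((M + mat 1) + mat (of_nat n)) (m - 1)
      = (\<Sum>j\<le>n. real (n choose j) *\<^sub>R f (Suc j))"
  proof -
    have "(M + mat 1) + mat (of_nat j) = M + mat (of_nat (Suc j))" for j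
      by (simp add: mat_add add_ac)
    then show ?thesis
      unfolding Suc.IH scaleR_sum_right f_def
      by (simp only: scaleR_scaleR choose_Suc_mult_fact diff_Suc_eq_diff_pred mult.left_commute)
  qed
  have "M + mat (of_nat (Suc n)) = (M + mat (of_nat n)) + mat 1"
    by (simp add: mat_add add_ac)
  then have "mpoch (M + mat (of_nat (Suc n))) m
      = mpoch (M + mat (of_nat n)) m + real m *\<^sub>R mpoch ((M + mat (of_nat n)) + mat 1) (m - 1)"
    using mpoch_add_one[of "M + mat (of_nat n)" m] by (simp only:)
  also have "\<dots> = mpoch (M + mat (of_nat n)) m
      + real m *\<^sub>R mpoch ((M + mat 1) + mat (of_nat n)) (m - 1)"
    by (simp only: add_ac)
  finally show ?case
    unfolding step Suc.IH[of M m] sum_choose_Suc_scaleR f_def .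
qed simp

lemma mpoch_shift_down:
  "mpoch (M - mat (of_nat n)) m =
    (\<Sum>j\<le>n. real (n choose j) *\<^sub>R ((-1) ^ j * real (m choose j) * fact j) *\<^sub>R
      mpoch M (m - j))"
proof (induction n arbitrary: m)
  case (Suc n)
  define f where "f j = ((-1) ^ j * real (m choose j) * fact j) *\<^sub>R mpoch M (m - j)" for j
  have step: "- real m *\<^sub>R mpoch (M - mat (of_nat n)) (m - 1)
      = (\<Sum>j\<le>n. real (n choose j) *\<^sub>R f (Suc j))"
  proof -
    have "- real m * (real (n choose j) * ((-1) ^ j * real (m - 1 choose j) * fact j))
        = real (n choose j) * ((-1) ^ Suc j * real (m choose Suc j) * fact (Suc j))" for j
      using choose_Suc_mult_fact[of m j] by (simp only: power_Suc) (simp add: mult_ac)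
    then show ?thesis
      unfolding Suc.IH scaleR_sum_right f_def
      by (simp only: scaleR_scaleR diff_Suc_eq_diff_pred)
  qed
  have "(M - mat (of_nat (Suc n))) + mat 1 = M - mat (of_nat n)"
    by (simp add: mat_add)
  then have up: "mpoch (M - mat (of_nat n)) m
      = mpoch (M - mat (of_nat (Suc n))) m + real m *\<^sub>R mpoch (M - mat (of_nat n)) (m - 1)"
    using mpoch_add_one[of "M - mat (of_nat (Suc n))" m] by (simp only:)
  have "mpoch (M - mat (of_nat (Suc n))) m
      = mpoch (M - mat (of_nat n)) m + - real m *\<^sub>R mpoch (M - mat (of_nat n)) (m - 1)"
    by (simp only: scaleR_minus_left diff_conv_add_uminus[symmetric] up add_diff_cancel)
  then show ?case
    unfolding step Suc.IH[of m] sum_choose_Suc_scaleR f_def .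
qed simp

lemma prod_fact_fun_upd_diff:
  assumes "finite I" and "i \<in> I" and "j \<le> m i"
  shows "(\<Prod>l\<in>I. fact (m l))
    = (m i choose j) * fact j * (\<Prod>l\<in>I. fact ((m(i := m i - j)) l) :: nat)"
proof -
  have "(\<Prod>l\<in>I. fact ((m(i := m i - j)) l))
      = fact (m i - j) * (\<Prod>l\<in>I - {i}. fact (m l) :: nat)"
    using assms(1,2) by (simp add: prod.remove[of I i])
  moreover have "fact (m i) = (m i choose j) * fact j * (fact (m i - j) :: nat)"
    using binomial_fact_lemma[OF assms(3)] by (simp add: mult_ac)
  ultimately show ?thesis
    using assms(1,2) by (simp add: prod.remove[of I i] mult.assoc)
qed

lemma sum_fun_upd_diff:
  fixes m :: "'a \<Rightarrow> nat"
  assumes "finite I" and "i \<in> I" and "j \<le> m i"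
  shows "(\<Sum>l\<in>I. m l) = j + (\<Sum>l\<in>I. (m(i := m i - j)) l)"
proof -
  have "(\<Sum>l\<in>I. (m(i := m i - j)) l) = (m i - j) + (\<Sum>l\<in>I - {i}. m l)"
    using assms(1,2) by (simp add: sum.remove[of I i])
  then show ?thesis
    using assms sum.remove[OF assms(1,2), of m] by arith
qed

definition FA_slot ::
  "nat \<Rightarrow> 'n::finite cmat \<Rightarrow> (nat \<Rightarrow> 'n cmat) \<Rightarrow> (nat \<Rightarrow> 'n cmat) \<Rightarrow> nat
    \<Rightarrow> (nat \<Rightarrow> nat) \<Rightarrow> 'n cmat \<Rightarrow> 'n cmat" where
  "FA_slot k A B C i m Y =
    mpoch A (\<Sum>l\<in>{1..k}. m l) ** oprod (\<lambda>l. mpoch (B l) (m l)) [1..<i] ** Y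
      ** oprod (\<lambda>l. mpoch (B l) (m l)) [Suc i..<k+1]
      ** oprod (\<lambda>l. mpoch_inv (C l) (m l)) [1..<k+1]"

lemma FA_slot_scaleR: "FA_slot k A B C i m (r *\<^sub>R Y) = r *\<^sub>R FA_slot k A B C i m Y"
  by (simp add: FA_slot_def matrix_mul_scaleR_left matrix_mul_scaleR_right)

lemma FA_slot_sum:
  "FA_slot k A B C i m (\<Sum>j\<in>S. Y j) = (\<Sum>j\<in>S. FA_slot k A B C i m (Y j))"
  by (simp add: FA_slot_def matrix_mul_sum_left matrix_mul_sum_right)

lemma FA_fun_upd:
  assumes "i \<in> {1..k}"
  shows "FA k A (B(i := X)) C m =
    (1 / real (\<Prod>l\<in>{1..k}. fact (m l))) *\<^sub>R FA_slot k A B C i m (mpoch X (m i))"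
proof -
  have "(\<lambda>l. mpoch ((B(i := X)) l) (m l)) = (\<lambda>l. mpoch (B l) (m l))(i := mpoch X (m i))"
    by auto
  then show ?thesis
    unfolding FA_def FA_slot_def by (simp only: oprod_upt_fun_upd[OF assms] matrix_mul_assoc)
qed

context
  fixes k :: nat and C :: "nat \<Rightarrow> 'n::finite cmat"
  assumes C_inv: "\<And>l q. l \<in> {1..k} \<Longrightarrow> invertible (C l + mat (of_nat q))"
    and C_commute: "\<And>l1 l2. l1 \<in> {1..k} \<Longrightarrow> l2 \<in> {1..k} \<Longrightarrow> C l1 ** C l2 = C l2 ** C l1"
begin

lemma oprod_mpoch_inv_absorb:
  assumes i: "i \<in> {1..k}" and "j \<le> m i"
  shows "oprod (\<lambda>l. mpoch_inv ((C(i := C i + mat (of_nat j))) l) ((m(i := m i - j)) l)) [1..<k+1]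
      ** mpoch_inv (C i) j = oprod (\<lambda>l. mpoch_inv (C l) (m l)) [1..<k+1]"
proof -
  define g where "g l = mpoch_inv (C l) (m l)" for l
  define Y where "Y = mpoch_inv (C i + mat (of_nat j)) (m i - j)"
  have "(\<lambda>l. mpoch_inv ((C(i := C i + mat (of_nat j))) l) ((m(i := m i - j)) l)) = g(i := Y)"
    by (auto simp: g_def Y_def)
  then have "oprod (\<lambda>l. mpoch_inv ((C(i := C i + mat (of_nat j))) l) ((m(i := m i - j)) l)) [1..<k+1]
      ** mpoch_inv (C i) j = oprod g [1..<i] ** Y ** (oprod g [Suc i..<k+1] ** mpoch_inv (C i) j)"
    by (simp only: oprod_upt_fun_upd[OF i] matrix_mul_assoc)
  also have "oprod g [Suc i..<k+1] ** mpoch_inv (C i) j = mpoch_inv (C i) j ** oprod g [Suc i..<k+1]"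
    unfolding g_def using i
    by (intro oprod_commute [symmetric] mpoch_inv_commute C_inv C_commute) auto
  also have "oprod g [1..<i] ** Y ** (mpoch_inv (C i) j ** oprod g [Suc i..<k+1])
      = oprod g [1..<i] ** (Y ** mpoch_inv (C i) j) ** oprod g [Suc i..<k+1]"
    by (simp only: matrix_mul_assoc)
  also have "Y ** mpoch_inv (C i) j = g i"
    unfolding g_def Y_def using i by (intro mpoch_inv_add C_inv assms(2))
  finally show ?thesis
    unfolding g_def oprod_upt_split[OF i, of "\<lambda>l. mpoch_inv (C l) (m l)"] .
qed

lemma xmul_FA_shift:
  assumes i: "i \<in> {1..k}"
  shows "mpoch A j
      ** xmul i j (FA k (A + mat (of_nat j)) (B(i := X)) (C(i := C i + mat (of_nat j)))) m
      ** mpoch_inv (C i) j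
    = (real (m i choose j) * fact j / real (\<Prod>l\<in>{1..k}. fact (m l))) *\<^sub>R
      FA_slot k A B C i m (mpoch X (m i - j))"
proof (cases "j \<le> m i")
  case False
  then show ?thesis by (simp add: xmul_def)
next
  case True
  define m' where "m' = m(i := m i - j)"
  have "(\<lambda>l. mpoch ((B(i := X)) l) (m' l)) = (\<lambda>l. mpoch (B l) (m l))(i := mpoch X (m i - j))"
    by (auto simp: m'_def)
  then have B_part: "oprod (\<lambda>l. mpoch ((B(i := X)) l) (m' l)) [1..<k+1]
      = oprod (\<lambda>l. mpoch (B l) (m l)) [1..<i] ** mpoch X (m i - j)
        ** oprod (\<lambda>l. mpoch (B l) (m l)) [Suc i..<k+1]"
    by (simp only: oprod_upt_fun_upd[OF i])
  have A_part: "mpoch A j ** mpoch (A + mat (of_nat j)) (\<Sum>l\<in>{1..k}. m' l)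
      = mpoch A (\<Sum>l\<in>{1..k}. m l)"
    unfolding mpoch_add m'_def
    using sum_fun_upd_diff[where m = m, OF finite_atLeastAtMost i True] by simp
  have C_part: "oprod (\<lambda>l. mpoch_inv ((C(i := C i + mat (of_nat j))) l) (m' l)) [1..<k+1]
      ** mpoch_inv (C i) j = oprod (\<lambda>l. mpoch_inv (C l) (m l)) [1..<k+1]"
    unfolding m'_def using i True by (rule oprod_mpoch_inv_absorb)
  have coeff: "1 / real (\<Prod>l\<in>{1..k}. fact (m' l))
      = real (m i choose j) * fact j / real (\<Prod>l\<in>{1..k}. fact (m l))"
    unfolding m'_def prod_fact_fun_upd_diff[where m = m, OF finite_atLeastAtMost i True]
    using True by (simp add: field_simps)
  have xm: "xmul i j F m = F m'" for F :: "'n::finite mfps"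
    using True by (simp add: xmul_def m'_def)
  have "mpoch A j
      ** xmul i j (FA k (A + mat (of_nat j)) (B(i := X)) (C(i := C i + mat (of_nat j)))) m
      ** mpoch_inv (C i) j
    = (1 / real (\<Prod>l\<in>{1..k}. fact (m' l))) *\<^sub>R
      ((mpoch A j ** mpoch (A + mat (of_nat j)) (\<Sum>l\<in>{1..k}. m' l))
       ** oprod (\<lambda>l. mpoch ((B(i := X)) l) (m' l)) [1..<k+1]
       ** (oprod (\<lambda>l. mpoch_inv ((C(i := C i + mat (of_nat j))) l) (m' l)) [1..<k+1]
           ** mpoch_inv (C i) j))"
    unfolding xm FA_def
    by (simp only: matrix_mul_scaleR_left matrix_mul_scaleR_right matrix_mul_assoc)
  then show ?thesis
    unfolding A_part B_part C_part coeff FA_slot_def by (simp only: matrix_mul_assoc)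
qed

lemma FA_shift_up:
  assumes i: "i \<in> {1..k}"
  shows "FA k A (B(i := B i + mat (of_nat n))) C m =
    (\<Sum>j = 0..n. real (n choose j) *\<^sub>R
       (mpoch A j ** xmul i j (FA k (A + mat (of_nat j)) (B(i := B i + mat (of_nat j)))
          (C(i := C i + mat (of_nat j)))) m ** mpoch_inv (C i) j))"
  \<comment> \<open>The shift identity is instantiated: as a general rewrite rule it would loop.\<close>
  unfolding FA_fun_upd[OF i, where A = A and C = C]
    mpoch_shift_up[where M = "B i" and n = n and m = "m i"] FA_slot_sum FA_slot_scaleR
    xmul_FA_shift[OF i] scaleR_sum_right atLeast0AtMost
  by (intro sum.cong refl) (simp only: scaleR_scaleR, simp add: field_simps)

lemma FA_shift_down:
  assumes i: "i \<in> {1..k}"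
  shows "FA k A (B(i := B i - mat (of_nat n))) C m =
    (\<Sum>j = 0..n. ((-1) ^ j * real (n choose j)) *\<^sub>R
       (mpoch A j ** xmul i j (FA k (A + mat (of_nat j)) B (C(i := C i + mat (of_nat j)))) m
        ** mpoch_inv (C i) j))"
  unfolding FA_fun_upd[OF i, where A = A and C = C]
    mpoch_shift_down[where M = "B i" and n = n and m = "m i"] FA_slot_sum FA_slot_scaleR
    xmul_FA_shift[OF i, where B = B and X = "B i", unfolded fun_upd_triv]
    scaleR_sum_right atLeast0AtMost
  by (intro sum.cong refl) (simp only: scaleR_scaleR, simp add: field_simps)

end

theorem mainTheorem3:
  fixes k i n :: nat
    and A :: "'n::finite cmat"
    and B C :: "nat \<Rightarrow> 'n cmat"
  assumes "k \<ge> 1"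
    and "\<And>j m. j \<in> {1..k} \<Longrightarrow> invertible (C j + mat (of_nat m))"
    and "\<And>j1 j2. j1 \<in> {1..k} \<Longrightarrow> j2 \<in> {1..k} \<Longrightarrow> C j1 ** C j2 = C j2 ** C j1"
    and "i \<in> {1..k}"
    and "n \<ge> 1"
    and "\<And>m. invertible (B i + mat (of_nat m))"
  shows "(\<forall>m. (\<forall>j. j \<notin> {1..k} \<longrightarrow> m j = 0) \<longrightarrow>
            FA k A (B(i := B i + mat (of_nat n))) C m =
            (\<Sum>n1 = 0..n. of_nat (n choose n1) *\<^sub>R
               (mpoch A n1
                ** xmul i n1 (FA k (A + mat (of_nat n1)) (B(i := B i + mat (of_nat n1)))
                                  (C(i := C i + mat (of_nat n1)))) m
                ** mpoch_inv (C i) n1)))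
       \<and> ((\<forall>n1. n1 \<le> n \<longrightarrow> invertible (B i - mat (of_nat n1))) \<longrightarrow>
          (\<forall>m. (\<forall>j. j \<notin> {1..k} \<longrightarrow> m j = 0) \<longrightarrow>
            FA k A (B(i := B i - mat (of_nat n))) C m =
            (\<Sum>n1 = 0..n. ((-1) ^ n1 * of_nat (n choose n1)) *\<^sub>R
               (mpoch A n1
                ** xmul i n1 (FA k (A + mat (of_nat n1)) B
                                  (C(i := C i + mat (of_nat n1)))) m
                ** mpoch_inv (C i) n1))))"
  using assms(2-4) by (blast intro: FA_shift_up FA_shift_down)

end
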